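(* Let $\alpha,\beta,\gamma\in\mathbb R$ with $\alpha\beta>0$, and let $g\in C^0([0,1))$ be non-negative. Let $w\in C^1([0,1))\cap C^2((0,1))$ be a solution of the inhomogeneous hypergeometric equation $$z(1-z)w''(z)+(\gamma-(\alpha+\beta+1)z)w'(z)-\alpha\beta\,w(z)=g(z),\qquad 0\le z<1,$$ with $w(0)\ge0$ and $w'(0)>0$. Then $w$ is strictly increasing on $[0,1)$. *)

theory Defs
  imports "HOL-Analysis.Analysis"
begin

end

theory Submission
  imports Defs
begin

lemma strict_mono_on_if_derivative_pos:
  fixes f f' :: "real \<Rightarrow> real" and S :: "real set"
  assumes "convex S"
    and deriv: "\<And>x. x \<in> S \<Longrightarrow> (f has_real_derivative f' x) (at x within S)"
    and pos: "\<And>x. x \<in> interior S \<Longrightarrow> f' x > 0"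
  shows "strict_mono_on S f"
proof (rule strict_mono_onI)
  fix r s assume "r \<in> S" "s \<in> S" "r < s"
  then have sub: "{r..s} \<subseteq> S"
    using \<open>convex S\<close> by (intro atMostAtLeast_subset_convex)
  have "(f has_derivative (*) (f' x)) (at x within {r..s})" if "r \<le> x" "x \<le> s" for x
    using DERIV_subset[OF deriv sub] sub that unfolding has_field_derivative_def
    by (meson atLeastAtMost_iff subsetD)
  from mvt_simple[OF \<open>r < s\<close> this]
  obtain x where x: "x \<in> {r<..<s}" "f s - f r = f' x * (s - r)"
    by blast
  have "{r<..<s} \<subseteq> interior S"
    using sub by (intro interior_maximal) auto
  with x have "f' x > 0"
    by (intro pos) blast
  with \<open>r < s\<close> have "f s - f r > 0"
    unfolding x(2) by simp
  then show "f r < f s"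
    by simp
qed

lemma first_zero_of_continuous:
  fixes f :: "real \<Rightarrow> real"
  assumes "a \<le> b" and cont: "continuous_on {a..b} f" and "f a > 0" "f b \<le> 0"
  obtains c where "c \<in> {a<..b}" "f c = 0" "\<And>x. x \<in> {a..<c} \<Longrightarrow> f x > 0"
proof -
  define T where "T = {a..b} \<inter> f -` {..0}"
  define c where "c = Inf T"
  have "closed T"
    unfolding T_def using cont by (rule continuous_closed_preimage) auto
  moreover have "b \<in> T"
    using assms by (simp add: T_def)
  moreover have "bdd_below T"
    unfolding T_def by (rule bdd_belowI[of _ a]) auto
  ultimately have "c \<in> T"
    unfolding c_def using closed_contains_Inf by blast
  then have c: "a \<le> c" "c \<le> b" "f c \<le> 0"
    by (auto simp: T_def)
  have before: "f x > 0" if "x \<in> {a..<c}" for x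
  proof (rule ccontr)
    assume "\<not> f x > 0"
    with that c have "x \<in> T"
      by (simp add: T_def)
    then have "c \<le> x"
      unfolding c_def using \<open>bdd_below T\<close> by (rule cInf_lower)
    with that show False
      by simp
  qed
  have "a < c"
    using c \<open>f a > 0\<close> by (cases "a = c") auto
  obtain y where y: "a \<le> y" "y \<le> c" "f y = 0"
    using IVT2'[of f c 0 a] c \<open>f a > 0\<close> continuous_on_subset[OF cont, of "{a..c}"] by auto
  have "y = c"
  proof (rule ccontr)
    assume "y \<noteq> c"
    with y have "f y > 0"
      by (intro before) simp
    with y show False
      by simp
  qed
  with y have "f c = 0"
    by simp
  with \<open>a < c\<close> \<open>c \<le> b\<close> before show ?thesis
    by (intro that) auto
qed

lemma derivative_nonpos_at_zero_from_above:
  fixes f :: "real \<Rightarrow> real"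
  assumes "(f has_real_derivative D) (at c)" "a < c" "f c = 0"
    and above: "\<And>x. x \<in> {a<..<c} \<Longrightarrow> f x > 0"
  shows "D \<le> 0"
proof (rule ccontr)
  assume "\<not> D \<le> 0"
  then obtain d where "d > 0" and dec: "\<And>h. h > 0 \<Longrightarrow> h < d \<Longrightarrow> f (c - h) < f c"
    using DERIV_pos_inc_left[OF assms(1)] by force
  define h where "h = min (d / 2) ((c - a) / 2)"
  have h: "0 < h" "h < d" "a < c - h"
    using \<open>d > 0\<close> \<open>a < c\<close> by (auto simp: h_def min_def field_simps)
  then have "f (c - h) < 0"
    using dec \<open>f c = 0\<close> by simp
  moreover have "f (c - h) > 0"
    using above h by simp
  ultimately show False
    by simp
qed

theorem lemma4p5:
  fixes \<alpha> \<beta> \<gamma> :: real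
    and w w' w'' g :: "real \<Rightarrow> real"
  assumes ab: "\<alpha> * \<beta> > 0"
    and g_cont: "continuous_on {0..<1} g"
    and g_nonneg: "\<And>z. z \<in> {0..<1} \<Longrightarrow> g z \<ge> 0"
    and w_deriv: "\<And>z. z \<in> {0..<1} \<Longrightarrow> (w has_real_derivative w' z) (at z within {0..<1})"
    and w'_cont: "continuous_on {0..<1} w'"
    and w'_deriv: "\<And>z. z \<in> {0<..<1} \<Longrightarrow> (w' has_real_derivative w'' z) (at z)"
    and w''_cont: "continuous_on {0<..<1} w''"
    and ode_int: "\<And>z. z \<in> {0<..<1} \<Longrightarrow>
       z * (1 - z) * w'' z + (\<gamma> - (\<alpha> + \<beta> + 1) * z) * w' z - \<alpha> * \<beta> * w z = g z"
    and ode_0: "\<gamma> * w' 0 - \<alpha> * \<beta> * w 0 = g 0"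
    and w0: "w 0 \<ge> 0"
    and w'0: "w' 0 > 0"
  shows "strict_mono_on {0..<1} w"
proof -
  have w'_pos: "w' z > 0" if z: "z \<in> {0..<1}" for z
  proof (rule ccontr)
    assume "\<not> w' z > 0"
    then have "w' z \<le> 0"
      by simp
    have cont: "continuous_on {0..z} w'"
      using w'_cont by (rule continuous_on_subset) (use z in auto)
    obtain z0 where z0: "z0 \<in> {0<..z}" "w' z0 = 0"
      and before: "\<And>x. x \<in> {0..<z0} \<Longrightarrow> w' x > 0"
      by (rule first_zero_of_continuous[OF _ cont w'0 \<open>w' z \<le> 0\<close>]) (use z in auto)
    have z0_in: "z0 \<in> {0<..<1}"
      using z0 z by auto
    have "strict_mono_on {0..z0} w"
    proof (rule strict_mono_on_if_derivative_pos)
      show "(w has_real_derivative w' x) (at x within {0..z0})" if "x \<in> {0..z0}" for x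
        by (rule DERIV_subset[OF w_deriv]) (use that z0_in in auto)
      show "w' x > 0" if "x \<in> interior {0..z0}" for x
        using before[of x] that by simp
    qed simp
    then have "w z0 > 0"
      using w0 z0_in strict_mono_onD[of "{0..z0}" w 0 z0] by simp
    have "z0 * (1 - z0) * w'' z0 = g z0 + \<alpha> * \<beta> * w z0"
      using ode_int[OF z0_in] unfolding \<open>w' z0 = 0\<close> by simp
    also have "\<dots> > 0"
      using g_nonneg[of z0] z0_in ab \<open>w z0 > 0\<close> by (simp add: add_nonneg_pos)
    finally have "w'' z0 > 0"
      by (rule zero_less_mult_pos) (use z0_in in simp)
    moreover have "w'' z0 \<le> 0"
      by (rule derivative_nonpos_at_zero_from_above[OF w'_deriv[OF z0_in], of 0]) (use z0 before in auto)
    ultimately show False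
      by simp
  qed
  show ?thesis
  proof (rule strict_mono_on_if_derivative_pos)
    show "w' x > 0" if "x \<in> interior {0..<1}" for x
      using w'_pos that interior_subset by blast
  qed (simp_all add: w_deriv)
qed

end
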